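(* Let $G=(V,E)$ be a graph with $V=\{1,\dots,n\}$ and let $k\ge 2$ be an integer with $\binom{k}{2}\le|E|$. For each edge $e=\{i,j\}$ let $\psi^e\in\mathbb{R}^n$ be the vector with $\psi^e_i=\psi^e_j=1$ and all other coordinates $0$. Let \[ S=\Big\{x\in\mathbb{R}^n:\ |\{e\in E: x\ge\psi^e \text{ coordinatewise}\}|\ge\tbinom{k}{2}\Big\}. \] Then (i) $S$ is star-shaped, with $(1,\dots,1)\in K_S$; and (ii) $G$ has a clique with $k$ vertices if and only if there exists $x\in S$ with $\sum_{i=1}^n x_i\le k$.
   Context: The kernel of a set $S\subseteq\mathbb{R}^n$ is $K_S=\{x\in S:[x,y]\subseteq S\ \forall y\in S\}$, where $[x,y]$ is the closed segment; $S$ is star-shaped if $K_S\ne\emptyset$. *)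

theory Defs
  imports "HOL-Analysis.Analysis"
begin

text \<open>Vertices are the elements of the finite type 'n (playing the role of {1..n}),
  so R^n is real^'n. An edge is a 2-element set of vertices.\<close>

definition psi :: "'n::finite set \<Rightarrow> real^'n" where
  "psi e = (\<chi> i. if i \<in> e then 1 else 0)"

definition kernel :: "'a::real_vector set \<Rightarrow> 'a set" where
  "kernel S = {x \<in> S. \<forall>y\<in>S. closed_segment x y \<subseteq> S}"

definition star_shaped :: "'a::real_vector set \<Rightarrow> bool" where
  "star_shaped S \<longleftrightarrow> kernel S \<noteq> {}"


definition S_set :: "'n::finite set set \<Rightarrow> nat \<Rightarrow> (real^'n) set" where
  "S_set E k = {x. card {e \<in> E. \<forall>i. psi e $ i \<le> x $ i} \<ge> k choose 2}"

end

theory Submission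
  imports Defs
begin

(* Call an edge e dominated by x if psi e <= x coordinatewise; then S is the
   set of points dominating at least k choose 2 edges.
   (i) Kernel: the coordinatewise upper set of a vector is convex and every psi e lies
   below the all-ones vector 1, so an edge dominated by y is dominated by every point
   of the segment [1, y].  As 1 dominates all of E, 1 lies in S and in its kernel.
   (ii) A k-clique C yields the indicator vector of C: it dominates all k choose 2 pairs
   in C and has coordinate sum k.  Conversely, if x in S has coordinate sum <= k, then x
   is nonnegative, the set C = {i. x_i >= 1} has at most k elements, and every dominated
   edge is a 2-subset of C.  Since at least k choose 2 edges are dominated, strict
   monotonicity of m choose 2 forces card C = k, and counting shows that the dominated
   edges are exactly the 2-subsets of C, i.e. C is a clique. *)

definition dominated_edges :: "'n::finite set set \<Rightarrow> real^'n \<Rightarrow> 'n set set" where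
  "dominated_edges E x = {e \<in> E. \<forall>i. psi e $ i \<le> x $ i}"

lemma mem_S_set: "x \<in> S_set E k \<longleftrightarrow> k choose 2 \<le> card (dominated_edges E x)"
  by (simp add: S_set_def dominated_edges_def)

lemma psi_le_iff:
  "(\<forall>i. psi e $ i \<le> x $ i) \<longleftrightarrow> (\<forall>i\<in>e. 1 \<le> x $ i) \<and> (\<forall>i. i \<notin> e \<longrightarrow> 0 \<le> x $ i)"
  by (auto simp: psi_def)

lemma psi_le_one: "psi e $ i \<le> ((\<chi> i. 1) :: real^'n) $ i"
  by (simp add: psi_def)

text \<open>For k \<ge> 2 a point of S dominates some edge, hence it is nonnegative.\<close>

lemma S_set_nonneg:
  assumes "x \<in> S_set E k" and "k \<ge> 2"
  shows "0 \<le> x $ i"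
proof -
  have "0 < k choose 2" using assms(2) by simp
  with assms(1) have "dominated_edges E x \<noteq> {}" by (auto simp: mem_S_set)
  then obtain e where "\<forall>i. psi e $ i \<le> x $ i" by (auto simp: dominated_edges_def)
  then show ?thesis by (cases "i \<in> e") (auto simp: psi_le_iff)
qed

lemma lower_bound_closed_segment:
  fixes a x y z :: "real^'n"
  assumes "\<forall>i. a $ i \<le> x $ i" and "\<forall>i. a $ i \<le> y $ i" and "z \<in> closed_segment x y"
  shows "a $ i \<le> z $ i"
proof -
  obtain u where u: "0 \<le> u" "u \<le> 1" and z: "z = (1 - u) *\<^sub>R x + u *\<^sub>R y"
    using assms(3) unfolding closed_segment_def by auto
  have "(1 - u) * a $ i \<le> (1 - u) * x $ i" using assms(1) u(2) by (simp add: mult_left_mono)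
  moreover have "u * a $ i \<le> u * y $ i" using assms(2) u(1) by (simp add: mult_left_mono)
  moreover have "z $ i = (1 - u) * x $ i + u * y $ i" using z by simp
  ultimately show ?thesis by (simp add: algebra_simps)
qed

lemma dominated_edges_segment:
  assumes "z \<in> closed_segment (\<chi> i. 1) y"
  shows "dominated_edges E y \<subseteq> dominated_edges E z"
  using lower_bound_closed_segment[OF _ _ assms] psi_le_one
  unfolding dominated_edges_def by blast

lemma one_in_kernel:
  assumes "k choose 2 \<le> card E"
  shows "(\<chi> i. 1) \<in> kernel (S_set E k)"
proof -
  have "dominated_edges E (\<chi> i. 1) = E"
    using psi_le_one unfolding dominated_edges_def by blast
  then have one_in: "(\<chi> i. 1) \<in> S_set E k" using assms by (simp add: mem_S_set)
  have "closed_segment (\<chi> i. 1) y \<subseteq> S_set E k" if "y \<in> S_set E k" for y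
  proof
    fix z assume "z \<in> closed_segment (\<chi> i. 1) y"
    then have "card (dominated_edges E y) \<le> card (dominated_edges E z)"
      by (intro card_mono dominated_edges_segment) auto
    with that show "z \<in> S_set E k" by (simp add: mem_S_set)
  qed
  with one_in show ?thesis unfolding kernel_def by blast
qed

lemma clique_point:
  fixes C :: "'n::finite set"
  assumes clique: "\<forall>i\<in>C. \<forall>j\<in>C. i \<noteq> j \<longrightarrow> {i, j} \<in> E"
  shows "(\<chi> i. if i \<in> C then 1 else 0) \<in> S_set E (card C)"
    and "(\<Sum>i\<in>UNIV. (\<chi> i. if i \<in> C then 1 else 0) $ i) = real (card C)"
proof -
  let ?x = "(\<chi> i. if i \<in> C then 1 else 0) :: real^'n"
  have "{B. B \<subseteq> C \<and> card B = 2} \<subseteq> dominated_edges E ?x"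
  proof safe
    fix B assume B: "B \<subseteq> C" "card B = 2"
    then obtain a b where "a \<noteq> b" "B = {a, b}" by (meson card_2_iff)
    with B clique have "B \<in> E" by auto
    moreover have "\<forall>i. psi B $ i \<le> ?x $ i" unfolding psi_le_iff using B(1) by auto
    ultimately show "B \<in> dominated_edges E ?x" by (simp add: dominated_edges_def)
  qed
  then have "card {B. B \<subseteq> C \<and> card B = 2} \<le> card (dominated_edges E ?x)"
    by (intro card_mono) auto
  then show "?x \<in> S_set E (card C)" by (simp add: mem_S_set n_subsets)
  show "(\<Sum>i\<in>UNIV. ?x $ i) = real (card C)" by (simp add: sum.If_cases)
qed

lemma dominated_edges_subset_pairs:
  assumes "\<forall>e\<in>E. card e = 2"
  shows "dominated_edges E x \<subseteq> {B. B \<subseteq> {i. 1 \<le> x $ i} \<and> card B = 2}"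
  using assms unfolding dominated_edges_def psi_le_iff by auto

lemma card_ge_one_le_sum:
  fixes x :: "real^'n"
  assumes "\<And>i. 0 \<le> x $ i"
  shows "real (card {i. 1 \<le> x $ i}) \<le> (\<Sum>i\<in>UNIV. x $ i)"
proof -
  have "real (card {i. 1 \<le> x $ i}) = (\<Sum>i\<in>{i. 1 \<le> x $ i}. 1)" by simp
  also have "\<dots> \<le> (\<Sum>i\<in>{i. 1 \<le> x $ i}. x $ i)" by (rule sum_mono) simp
  also have "\<dots> \<le> (\<Sum>i\<in>UNIV. x $ i)" by (rule sum_mono2) (auto simp: assms)
  finally show ?thesis .
qed

lemma choose2_strict_mono:
  assumes "m < k" and "2 \<le> k"
  shows "m choose 2 < k choose (2::nat)"
proof -
  obtain j where k: "k = Suc j" and "1 \<le> j" using assms(2) by (cases k) auto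
  have "m choose 2 \<le> j choose 2" using assms(1) k by (intro binomial_right_mono) simp
  also have "\<dots> < (j choose 2) + (j choose 1)" using \<open>1 \<le> j\<close> by simp
  also have "\<dots> = k choose 2" by (simp add: k numeral_2_eq_2)
  finally show ?thesis .
qed

lemma point_clique:
  assumes edges: "\<forall>e\<in>E. card e = 2" and k2: "k \<ge> 2"
    and x: "x \<in> S_set E k" and sum_x: "(\<Sum>i\<in>UNIV. x $ i) \<le> real k"
  shows "\<exists>C. card C = k \<and> (\<forall>i\<in>C. \<forall>j\<in>C. i \<noteq> j \<longrightarrow> {i, j} \<in> E)"
proof -
  define C where "C = {i. 1 \<le> x $ i}"
  define pairs where "pairs = {B. B \<subseteq> C \<and> card B = 2}"
  have sub: "dominated_edges E x \<subseteq> pairs"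
    using dominated_edges_subset_pairs[OF edges] by (simp add: C_def pairs_def)
  have card_pairs: "card pairs = card C choose 2" by (simp add: pairs_def n_subsets)
  have le: "k choose 2 \<le> card (dominated_edges E x)" using x by (simp add: mem_S_set)
  also have "\<dots> \<le> card C choose 2" using card_mono[OF _ sub] card_pairs by simp
  finally have "k choose 2 \<le> card C choose 2" .
  moreover have "card C \<le> k"
    using card_ge_one_le_sum[of x] S_set_nonneg[OF x k2] sum_x by (simp add: C_def)
  ultimately have card_C: "card C = k" using choose2_strict_mono[of "card C" k] k2 by linarith
  have "dominated_edges E x = pairs"
    using card_mono[OF _ sub] card_pairs card_C le by (intro card_subset_eq[OF _ sub]) auto
  then have "\<forall>i\<in>C. \<forall>j\<in>C. i \<noteq> j \<longrightarrow> {i, j} \<in> E"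
    by (auto simp: pairs_def dominated_edges_def)
  with card_C show ?thesis by blast
qed

theorem mainTheorem17:
  fixes E :: "'n::finite set set" and k :: nat
  assumes edges: "\<forall>e\<in>E. card e = 2"
    and k2: "k \<ge> 2"
    and kE: "k choose 2 \<le> card E"
  shows "star_shaped (S_set E k) \<and> (\<chi> i. 1) \<in> kernel (S_set E k) \<and>
    ((\<exists>C. card C = k \<and> (\<forall>i\<in>C. \<forall>j\<in>C. i \<noteq> j \<longrightarrow> {i, j} \<in> E))
      \<longleftrightarrow> (\<exists>x\<in>S_set E k. (\<Sum>i\<in>UNIV. x $ i) \<le> real k))"
proof -
  have clique_iff: "(\<exists>C. card C = k \<and> (\<forall>i\<in>C. \<forall>j\<in>C. i \<noteq> j \<longrightarrow> {i, j} \<in> E))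
      \<longleftrightarrow> (\<exists>x\<in>S_set E k. (\<Sum>i\<in>UNIV. x $ i) \<le> real k)"
  proof
    assume "\<exists>C. card C = k \<and> (\<forall>i\<in>C. \<forall>j\<in>C. i \<noteq> j \<longrightarrow> {i, j} \<in> E)"
    then obtain C where card_C: "card C = k" and clique: "\<forall>i\<in>C. \<forall>j\<in>C. i \<noteq> j \<longrightarrow> {i, j} \<in> E"
      by blast
    show "\<exists>x\<in>S_set E k. (\<Sum>i\<in>UNIV. x $ i) \<le> real k"
      using clique_point[OF clique] card_C by (intro bexI[of _ "\<chi> i. if i \<in> C then 1 else 0"]) simp_all
  next
    assume "\<exists>x\<in>S_set E k. (\<Sum>i\<in>UNIV. x $ i) \<le> real k"
    then show "\<exists>C. card C = k \<and> (\<forall>i\<in>C. \<forall>j\<in>C. i \<noteq> j \<longrightarrow> {i, j} \<in> E)"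
      using point_clique[OF edges k2] by blast
  qed
  have ker: "(\<chi> i. 1) \<in> kernel (S_set E k)" using one_in_kernel[OF kE] .
  then have "star_shaped (S_set E k)" unfolding star_shaped_def by blast
  with ker clique_iff show ?thesis by blast
qed

end
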